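(* Let $n\ge3$, let $i_1,\dots,i_n$ be the canonical generators of $Q_n$, let $j,k<n$ with $j\ne k$, let $x\in\langle i_1,\dots,i_{n-1}\rangle$ and $s\in\{1,-1\}$. If $i_j(i_kx)=s\,(i_k(i_jx))$, then $i_j(i_k(xi_n))=s\,(i_k(i_j(xi_n)))$.
   Context: Cayley--Dickson loops: $Q_0=\{1,-1\}\subset\mathbb{R}$ with conjugation $x^*=x$. For $n\ge1$, $Q_n=\{(x,0),(x,1)\mid x\in Q_{n-1}\}$ with multiplication $(x,0)(y,0)=(xy,0)$, $(x,0)(y,1)=(yx,1)$, $(x,1)(y,0)=(xy^*,1)$, $(x,1)(y,1)=(-y^*x,0)$ and conjugation $(x,0)^*=(x^*,0)$, $(x,1)^*=(-x,1)$, where $-(x,a)=(-x,a)$. $Q_n$ is a loop with neutral element $1=(1,0,\dots,0)$; $-1=(-1,0,\dots,0)$ commutes and associates with all elements. $Q_{n-1}$ is identified with the subloop $\{(x,0)\}\subset Q_n$. Canonical generators: $i_n=(1_{Q_{n-1}},1)\in Q_n$, and $i_1,\dots,i_{n-1}$ are the canonical generators of $Q_{n-1}\subset Q_n$. *)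

theory Defs
  imports Main
begin

text \<open>Elements of the Cayley--Dickson loops.
  CBase False = 1, CBase True = -1 in Q_0; CPair x b = (x, b) with b = True meaning 1.\<close>
datatype cd = CBase bool | CPair cd bool

fun cd_level :: "cd \<Rightarrow> nat" where
  "cd_level (CBase _) = 0"
| "cd_level (CPair x _) = Suc (cd_level x)"

definition Q :: "nat \<Rightarrow> cd set" where
  "Q n = {x. cd_level x = n}"

fun cd_neg :: "cd \<Rightarrow> cd" where
  "cd_neg (CBase s) = CBase (\<not> s)"
| "cd_neg (CPair x a) = CPair (cd_neg x) a"

fun cd_conj :: "cd \<Rightarrow> cd" where
  "cd_conj (CBase s) = CBase s"
| "cd_conj (CPair x False) = CPair (cd_conj x) False"
| "cd_conj (CPair x True) = CPair (cd_neg x) True"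

lemma size_cd_neg [simp]: "size (cd_neg x) = size x"
  by (induction x) auto

lemma size_cd_conj [simp]: "size (cd_conj x) = size x"
  by (induction x rule: cd_conj.induct) auto

text \<open>Multiplication; on arguments of different levels the value is irrelevant.\<close>
function cd_mult :: "cd \<Rightarrow> cd \<Rightarrow> cd" where
  "cd_mult (CBase s) (CBase t) = CBase (s \<noteq> t)"
| "cd_mult (CPair x False) (CPair y False) = CPair (cd_mult x y) False"
| "cd_mult (CPair x False) (CPair y True) = CPair (cd_mult y x) True"
| "cd_mult (CPair x True) (CPair y False) = CPair (cd_mult x (cd_conj y)) True"
| "cd_mult (CPair x True) (CPair y True) = CPair (cd_neg (cd_mult (cd_conj y) x)) False"
| "cd_mult (CBase s) (CPair y b) = CBase False"
| "cd_mult (CPair x a) (CBase t) = CBase False"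
  by pat_completeness auto
termination
  by (relation "measure (\<lambda>(x, y). size x + size y)") auto

fun cd_one :: "nat \<Rightarrow> cd" where
  "cd_one 0 = CBase False"
| "cd_one (Suc n) = CPair (cd_one n) False"

text \<open>Canonical generator i_m of Q_n (for 1 \<le> m \<le> n).\<close>
fun cd_gen :: "nat \<Rightarrow> nat \<Rightarrow> cd" where
  "cd_gen 0 m = CBase False"
| "cd_gen (Suc n) m = (if m = Suc n then CPair (cd_one n) True else CPair (cd_gen n m) False)"

definition cd_ldiv :: "nat \<Rightarrow> cd \<Rightarrow> cd \<Rightarrow> cd" where
  "cd_ldiv n x y = (THE z. z \<in> Q n \<and> cd_mult x z = y)"

definition cd_rdiv :: "nat \<Rightarrow> cd \<Rightarrow> cd \<Rightarrow> cd" where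
  "cd_rdiv n y x = (THE z. z \<in> Q n \<and> cd_mult z x = y)"

inductive_set subloop_gen :: "nat \<Rightarrow> cd set \<Rightarrow> cd set" for n S where
  base: "x \<in> S \<Longrightarrow> x \<in> subloop_gen n S"
| one: "cd_one n \<in> subloop_gen n S"
| mult: "x \<in> subloop_gen n S \<Longrightarrow> y \<in> subloop_gen n S \<Longrightarrow> cd_mult x y \<in> subloop_gen n S"
| ldiv: "x \<in> subloop_gen n S \<Longrightarrow> y \<in> subloop_gen n S \<Longrightarrow> cd_ldiv n x y \<in> subloop_gen n S"
| rdiv: "x \<in> subloop_gen n S \<Longrightarrow> y \<in> subloop_gen n S \<Longrightarrow> cd_rdiv n y x \<in> subloop_gen n S"

end

theory Submission
  imports Defs
begin

(* Write x = (y,0) and s = (t,0) with y, t in Q_{n-1}, t = 1 or -1; the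
   generators i_j, i_k (j,k < n) are (a,0), (b,0) with a* = -a, b* = -b.  By the
   doubling formulas  x i_n = (y,1)  and  (c,0)(w,1) = (w c,1),  the conclusion says
   (y b) a = ((y a) b) t  in Q_{n-1}, while the hypothesis says  a (b y) = t (b (a y)).
   Conjugation is an anti-automorphism fixing t and negating a, b, so conjugating the
   hypothesis gives  (y* b) a = ((y* a) b) t;  since y* = y or y* = -y and -1 is central,
   the claim follows. *)

lemma level_neg [simp]: "cd_level (cd_neg x) = cd_level x"
  by (induction x) auto

lemma level_conj [simp]: "cd_level (cd_conj x) = cd_level x"
  by (induction x rule: cd_conj.induct) auto

lemma neg_neg [simp]: "cd_neg (cd_neg x) = x"
  by (induction x) auto

lemma conj_neg: "cd_conj (cd_neg x) = cd_neg (cd_conj x)"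
  by (induction x rule: cd_conj.induct) auto

lemma conj_conj [simp]: "cd_conj (cd_conj x) = x"
  by (induction x rule: cd_conj.induct) (auto simp: conj_neg)

lemma neg_inj [simp]: "(cd_neg x = cd_neg y) = (x = y)"
  by (metis neg_neg)

lemma conj_inj [simp]: "(cd_conj x = cd_conj y) = (x = y)"
  by (metis conj_conj)

lemma conj_self_or_neg: "cd_conj y = y \<or> cd_conj y = cd_neg y"
  by (induction y rule: cd_conj.induct) auto

lemma level_one [simp]: "cd_level (cd_one n) = n"
  by (induction n) auto

lemma level_gen [simp]: "cd_level (cd_gen n m) = n"
  by (induction n) auto

lemma conj_one [simp]: "cd_conj (cd_one n) = cd_one n"
  by (induction n) auto

lemma conj_gen: "1 \<le> j \<Longrightarrow> j \<le> m \<Longrightarrow> cd_conj (cd_gen m j) = cd_neg (cd_gen m j)"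
  by (induction m) auto

lemma gen_lower: "j \<le> m \<Longrightarrow> cd_gen (Suc m) j = CPair (cd_gen m j) False"
  by simp

lemma gen_top: "cd_gen (Suc m) (Suc m) = CPair (cd_one m) True"
  by simp

lemma level_mult [simp]: "cd_level x = cd_level y \<Longrightarrow> cd_level (cd_mult x y) = cd_level x"
  by (induction x y rule: cd_mult.induct) auto

lemma mult_neg:
  "cd_level u = cd_level v \<Longrightarrow>
     cd_mult (cd_neg u) v = cd_neg (cd_mult u v) \<and> cd_mult u (cd_neg v) = cd_neg (cd_mult u v)"
  by (induction u v rule: cd_mult.induct) (auto simp: conj_neg)

lemma mult_neg_left [simp]:
  "cd_level u = cd_level v \<Longrightarrow> cd_mult (cd_neg u) v = cd_neg (cd_mult u v)"
  using mult_neg by blast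

lemma mult_neg_right [simp]:
  "cd_level u = cd_level v \<Longrightarrow> cd_mult u (cd_neg v) = cd_neg (cd_mult u v)"
  using mult_neg by blast

lemma conj_mult:
  "cd_level u = cd_level v \<Longrightarrow> cd_conj (cd_mult u v) = cd_mult (cd_conj v) (cd_conj u)"
  by (induction u v rule: cd_mult.induct) (auto simp: conj_neg)

lemma mult_one:
  "cd_level y = n \<Longrightarrow> cd_mult (cd_one n) y = y \<and> cd_mult y (cd_one n) = y"
proof (induction n arbitrary: y)
  case 0
  then show ?case by (cases y) auto
next
  case (Suc n)
  then obtain y' b where "y = CPair y' b" "cd_level y' = n" by (cases y) auto
  with Suc.IH show ?case by (cases b) auto
qed

text \<open>Left and right cancellation; they are proved simultaneously because the doubling
  formulas exchange the two sides and insert conjugations.\<close>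
lemma mult_cancel:
  assumes "cd_level x = n" "cd_level y = n" "cd_level z = n"
  shows "(cd_mult x y = cd_mult x z \<longrightarrow> y = z) \<and> (cd_mult y x = cd_mult z x \<longrightarrow> y = z)"
  using assms
proof (induction n arbitrary: x y z)
  case 0
  then show ?case by (cases x; cases y; cases z) auto
next
  case (Suc n)
  obtain x' a where x: "x = CPair x' a" "cd_level x' = n" using Suc.prems by (cases x) auto
  obtain y' b where y: "y = CPair y' b" "cd_level y' = n" using Suc.prems by (cases y) auto
  obtain z' c where z: "z = CPair z' c" "cd_level z' = n" using Suc.prems by (cases z) auto
  have left: "\<And>w p q. cd_level w = n \<Longrightarrow> cd_level p = n \<Longrightarrow> cd_level q = n \<Longrightarrow>
      cd_mult w p = cd_mult w q \<Longrightarrow> p = q"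
    and right: "\<And>w p q. cd_level w = n \<Longrightarrow> cd_level p = n \<Longrightarrow> cd_level q = n \<Longrightarrow>
      cd_mult p w = cd_mult q w \<Longrightarrow> p = q"
    using Suc.IH by blast+
  show ?case unfolding x y z
    apply (cases a; cases b; cases c)
      apply (simp_all only: cd_mult.simps cd.inject neg_inj bool.simps simp_thms)
    using x y z left right by (metis level_conj conj_inj)+
qed

section \<open>Q_n is finite, so divisions are well defined\<close>

lemma finite_Q: "finite (Q n)"
proof (induction n)
  case 0
  have "Q 0 = CBase ` UNIV" unfolding Q_def by (auto, case_tac x, auto)
  then show ?case by simp
next
  case (Suc n)
  have "Q (Suc n) = (\<lambda>(x, b). CPair x b) ` (Q n \<times> UNIV)" unfolding Q_def
    by (auto, case_tac x, auto)
  then show ?case using Suc by simp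
qed

lemma unique_preimage_Q:
  assumes inj: "inj_on f (Q n)" and into: "f ` Q n \<subseteq> Q n" and y: "y \<in> Q n"
  shows "\<exists>!z. z \<in> Q n \<and> f z = y"
proof -
  have "f ` Q n = Q n" using inj into finite_Q by (simp add: endo_inj_surj)
  then have "\<exists>z\<in>Q n. f z = y" using y by (metis imageE)
  then show ?thesis using inj unfolding inj_on_def by blast
qed

lemma ldiv_spec:
  assumes "x \<in> Q n" "y \<in> Q n"
  shows "cd_ldiv n x y \<in> Q n \<and> cd_mult x (cd_ldiv n x y) = y"
  unfolding cd_ldiv_def
proof (rule theI', rule unique_preimage_Q)
  show "inj_on (cd_mult x) (Q n)" using mult_cancel assms unfolding inj_on_def Q_def by blast
qed (use assms in \<open>auto simp: Q_def\<close>)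

lemma rdiv_spec:
  assumes "x \<in> Q n" "y \<in> Q n"
  shows "cd_rdiv n y x \<in> Q n \<and> cd_mult (cd_rdiv n y x) x = y"
  unfolding cd_rdiv_def
proof (rule theI', rule unique_preimage_Q)
  show "inj_on (\<lambda>z. cd_mult z x) (Q n)"
    using mult_cancel assms unfolding inj_on_def Q_def by blast
qed (use assms in \<open>auto simp: Q_def\<close>)

text \<open>If S lies in Q_m x {0}, then so does the subloop of Q_{m+1} it generates: the lower
  half is closed under products, and a quotient with last bit 1 would force the dividend
  or divisor out of the lower half.\<close>
lemma subloop_gen_lower:
  assumes S: "\<forall>s\<in>S. \<exists>y. s = CPair y False \<and> cd_level y = m"
    and x: "x \<in> subloop_gen (Suc m) S"
  shows "\<exists>y. x = CPair y False \<and> cd_level y = m"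
  using x
proof (induction rule: subloop_gen.induct)
  case (base x)
  then show ?case using S by blast
next
  case (ldiv x y)
  then have "x \<in> Q (Suc m)" "y \<in> Q (Suc m)" unfolding Q_def by auto
  from ldiv_spec[OF this] obtain z' c where
    "cd_ldiv (Suc m) x y = CPair z' c" "cd_level z' = m" "cd_mult x (CPair z' c) = y"
    unfolding Q_def by (cases "cd_ldiv (Suc m) x y") auto
  then show ?case using ldiv.IH by (cases c) auto
next
  case (rdiv x y)
  then have "x \<in> Q (Suc m)" "y \<in> Q (Suc m)" unfolding Q_def by auto
  from rdiv_spec[OF this] obtain z' c where
    "cd_rdiv (Suc m) y x = CPair z' c" "cd_level z' = m" "cd_mult (CPair z' c) x = y"
    unfolding Q_def by (cases "cd_rdiv (Suc m) y x") auto
  then show ?case using rdiv.IH by (cases c) auto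
qed auto

text \<open>For purely imaginary a, b and a sign t, the relation a (b y) = t (b (a y)) implies the
  mirrored relation (y b) a = ((y a) b) t: conjugate, then use y* = y or y* = -y.\<close>
lemma sign_relation_reversed:
  assumes lv: "cd_level a = m" "cd_level b = m" "cd_level y = m"
    and ca: "cd_conj a = cd_neg a" and cb: "cd_conj b = cd_neg b"
    and t: "t = cd_one m \<or> t = cd_neg (cd_one m)"
    and h: "cd_mult a (cd_mult b y) = cd_mult t (cd_mult b (cd_mult a y))"
  shows "cd_mult (cd_mult y b) a = cd_mult (cd_mult (cd_mult y a) b) t"
proof -
  have one: "\<And>u. cd_level u = m \<Longrightarrow> cd_mult (cd_one m) u = u \<and> cd_mult u (cd_one m) = u"
    using mult_one by blast
  have "cd_conj (cd_mult a (cd_mult b y)) = cd_conj (cd_mult t (cd_mult b (cd_mult a y)))"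
    using h by simp
  then have conj_rel:
    "cd_mult (cd_mult (cd_conj y) b) a = cd_mult (cd_mult (cd_mult (cd_conj y) a) b) t"
    using lv t one by (auto simp: conj_mult ca cb conj_neg)
  from conj_self_or_neg[of y] show ?thesis
  proof
    assume "cd_conj y = y"
    then show ?thesis using conj_rel by simp
  next
    assume "cd_conj y = cd_neg y"
    then show ?thesis using conj_rel lv t one
      by (auto simp del: neg_inj) (metis neg_neg level_mult)+
  qed
qed

theorem mainTheorem9:
  fixes n j k :: nat and x s :: cd
  assumes "n \<ge> 3"
    and "1 \<le> j" and "j < n" and "1 \<le> k" and "k < n" and "j \<noteq> k"
    and "x \<in> subloop_gen n {cd_gen n m | m. 1 \<le> m \<and> m \<le> n - 1}"
    and "s \<in> {cd_one n, cd_neg (cd_one n)}"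
    and "cd_mult (cd_gen n j) (cd_mult (cd_gen n k) x)
         = cd_mult s (cd_mult (cd_gen n k) (cd_mult (cd_gen n j) x))"
  shows "cd_mult (cd_gen n j) (cd_mult (cd_gen n k) (cd_mult x (cd_gen n n)))
         = cd_mult s (cd_mult (cd_gen n k) (cd_mult (cd_gen n j) (cd_mult x (cd_gen n n))))"
proof -
  obtain m where n: "n = Suc m" using assms(1) by (cases n) auto
  have gj: "cd_gen n j = CPair (cd_gen m j) False" and gk: "cd_gen n k = CPair (cd_gen m k) False"
    using assms(3,5) n gen_lower by auto
  have ij: "cd_conj (cd_gen m j) = cd_neg (cd_gen m j)"
    and ik: "cd_conj (cd_gen m k) = cd_neg (cd_gen m k)"
    using assms(2-5) n by (auto intro: conj_gen)
  have "\<forall>g\<in>{cd_gen n i | i. 1 \<le> i \<and> i \<le> n - 1}. \<exists>y. g = CPair y False \<and> cd_level y = m"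
    using n by auto
  then obtain y where x: "x = CPair y False" "cd_level y = m"
    using subloop_gen_lower assms(7) unfolding n by blast
  obtain t where s: "s = CPair t False" and t: "t = cd_one m \<or> t = cd_neg (cd_one m)"
    using assms(8) unfolding n by auto
  have "cd_mult (cd_gen m j) (cd_mult (cd_gen m k) y)
        = cd_mult t (cd_mult (cd_gen m k) (cd_mult (cd_gen m j) y))"
    using assms(9) unfolding gj gk x s by simp
  then have "cd_mult (cd_mult y (cd_gen m k)) (cd_gen m j)
             = cd_mult (cd_mult (cd_mult y (cd_gen m j)) (cd_gen m k)) t"
    using sign_relation_reversed[OF _ _ _ ij ik t] x(2) by simp
  moreover have "cd_mult (cd_one m) y = y" using mult_one x by blast
  moreover have "cd_gen n n = CPair (cd_one m) True" using n gen_top by simp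
  ultimately show ?thesis unfolding gj gk x s by simp
qed

end
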